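(* For any two knots $K_1,K_2\subset S^3$, $\delta(K_1\# K_2)=\delta(K_1)\delta(K_2)$. Furthermore, \[ b_{\mathrm{e}}(K_1\# K_2)=b_{\mathrm{e}}(K_1)+b_{\mathrm{e}}(K_2)+\tfrac14(\delta(K_1)-1)(\delta(K_2)-1),\] \[ b_{\mathrm{o}}(K_1\# K_2)=b_{\mathrm{o}}(K_1)+b_{\mathrm{o}}(K_2)+\tfrac14(\delta(K_1)-1)(\delta(K_2)-1).\]
   Context: For a knot $K\subset S^3$, $\widehat{\mathrm{CFK}}(K)$ denotes the (hat) knot Floer chain complex with coefficients in $\mathbb{F}_2$: a finite-dimensional, graded, filtered chain complex (differential lowering grading by one, not increasing filtration level), well defined up to filtered chain homotopy equivalence; its unfiltered homology is one-dimensional, in grading $0$, and $\widehat{\mathrm{CFK}}(K_1\# K_2)\simeq \widehat{\mathrm{CFK}}(K_1)\otimes\widehat{\mathrm{CFK}}(K_2)$. A bar $(T\to B)$ is a two-dimensional complex with homogeneous basis $T,B$, $\partial T=B$, and filtration level of $B$ strictly less than that of $T$; it is even or odd according as the grading of $B$ is even or odd. A bar-complex is a complex together with a direct sum decomposition into one-dimensional complexes and bars. Every finite-dimensional graded filtered complex over $\mathbb{F}_2$ is filtered chain homotopy equivalent to a bar-complex, which is unique up to isomorphism. Let $\widehat{C}(K)$ be the bar-complex representative of $\widehat{\mathrm{CFK}}(K)$. Define $\delta(K)=\dim\widehat{C}(K)$ (equal to the total dimension of knot Floer homology $\widehat{\mathrm{HFK}}(K)$), and let $b_{\mathrm{e}}(K)$,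 $b_{\mathrm{o}}(K)$ be the numbers of even and odd bars in $\widehat{C}(K)$; thus $\delta(K)=1+2(b_{\mathrm{e}}(K)+b_{\mathrm{o}}(K))$. *)

theory Defs
  imports Main "HOL-Library.Z2"
begin

text \<open>A finite-dimensional graded filtered chain complex over F2, presented by a
homogeneous filtered basis e_0,...,e_(dim-1): basis element e_i has grading gr i and
filtration level fl i; dd i j is the coefficient of e_i in the differential of e_j.\<close>

record cx =
  dim :: nat
  gr :: "nat \<Rightarrow> int"
  fl :: "nat \<Rightarrow> int"
  dd :: "nat \<Rightarrow> nat \<Rightarrow> bit"

type_synonym mat = "nat \<Rightarrow> nat \<Rightarrow> bit"

definition mmul :: "nat \<Rightarrow> mat \<Rightarrow> mat \<Rightarrow> mat" where
  "mmul m A B = (\<lambda>i k. \<Sum>j<m. A i j * B j k)"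

definition idm :: "nat \<Rightarrow> mat" where
  "idm n = (\<lambda>i j. if i = j \<and> i < n then 1 else 0)"

definition app :: "nat \<Rightarrow> mat \<Rightarrow> (nat \<Rightarrow> bit) \<Rightarrow> (nat \<Rightarrow> bit)" where
  "app m A v = (\<lambda>i. \<Sum>j<m. A i j * v j)"

definition is_cx :: "cx \<Rightarrow> bool" where
  "is_cx C \<longleftrightarrow>
     (\<forall>i j. dd C i j \<noteq> 0 \<longrightarrow> i < dim C \<and> j < dim C \<and> gr C i + 1 = gr C j \<and> fl C i \<le> fl C j)
   \<and> mmul (dim C) (dd C) (dd C) = (\<lambda>i k. 0)"

definition filt_chain_map :: "cx \<Rightarrow> cx \<Rightarrow> mat \<Rightarrow> bool" where
  "filt_chain_map C C' F \<longleftrightarrow>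
     (\<forall>i j. F i j \<noteq> 0 \<longrightarrow> i < dim C' \<and> j < dim C \<and> gr C' i = gr C j \<and> fl C' i \<le> fl C j)
   \<and> mmul (dim C') (dd C') F = mmul (dim C) F (dd C)"

definition filt_htpy :: "cx \<Rightarrow> mat \<Rightarrow> bool" where
  "filt_htpy C H \<longleftrightarrow>
     (\<forall>i j. H i j \<noteq> 0 \<longrightarrow> i < dim C \<and> j < dim C \<and> gr C i = gr C j + 1 \<and> fl C i \<le> fl C j)"

text \<open>G \<circ> F is filtered chain homotopic to the identity of C via H (characteristic 2).\<close>
definition htpy_id :: "cx \<Rightarrow> mat \<Rightarrow> mat \<Rightarrow> bool" where
  "htpy_id C GF H \<longleftrightarrow> filt_htpy C H \<and>
     GF = (\<lambda>i j. idm (dim C) i j + mmul (dim C) (dd C) H i j + mmul (dim C) H (dd C) i j)"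

definition fequiv :: "cx \<Rightarrow> cx \<Rightarrow> bool" where
  "fequiv C C' \<longleftrightarrow> (\<exists>F G H H'.
      filt_chain_map C C' F \<and> filt_chain_map C' C G \<and>
      htpy_id C (mmul (dim C') G F) H \<and> htpy_id C' (mmul (dim C) F G) H')"

definition cycles :: "cx \<Rightarrow> int \<Rightarrow> (nat \<Rightarrow> bit) set" where
  "cycles C k = {v. (\<forall>i. v i \<noteq> 0 \<longrightarrow> i < dim C \<and> gr C i = k) \<and> app (dim C) (dd C) v = (\<lambda>i. 0)}"

definition boundaries :: "cx \<Rightarrow> int \<Rightarrow> (nat \<Rightarrow> bit) set" where
  "boundaries C k = {app (dim C) (dd C) w | w. \<forall>i. w i \<noteq> 0 \<longrightarrow> i < dim C \<and> gr C i = k + 1}"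

definition homology :: "cx \<Rightarrow> int \<Rightarrow> (nat \<Rightarrow> bit) set set" where
  "homology C k = cycles C k // {(x, y). x \<in> cycles C k \<and> y \<in> cycles C k \<and> x - y \<in> boundaries C k}"

text \<open>Homology is one-dimensional over F2 and concentrated in grading 0
(an F2-space is one-dimensional iff it has exactly 2 elements, zero iff 1 element).\<close>
definition hom_one_in_zero :: "cx \<Rightarrow> bool" where
  "hom_one_in_zero C \<longleftrightarrow> card (homology C 0) = 2 \<and> (\<forall>k. k \<noteq> 0 \<longrightarrow> card (homology C k) = 1)"

text \<open>Tensor product: basis e_a \<otimes> e_b is indexed by a * dim C2 + b.\<close>
definition tensor :: "cx \<Rightarrow> cx \<Rightarrow> cx" where
  "tensor C1 C2 = (let n2 = dim C2; n = dim C1 * n2 in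
     \<lparr> dim = n,
       gr = (\<lambda>p. gr C1 (p div n2) + gr C2 (p mod n2)),
       fl = (\<lambda>p. fl C1 (p div n2) + fl C2 (p mod n2)),
       dd = (\<lambda>p q. if p < n \<and> q < n then
               (if p mod n2 = q mod n2 then dd C1 (p div n2) (q div n2) else 0)
             + (if p div n2 = q div n2 then dd C2 (p mod n2) (q mod n2) else 0)
             else 0) \<rparr>)"

text \<open>Bar-complex: the basis gives the direct sum decomposition; each basis vector is
hit by / maps to at most one basis vector, and every nonzero entry (a bar T \<rightarrow> B)
strictly drops the filtration level.\<close>
definition is_bar_cx :: "cx \<Rightarrow> bool" where
  "is_bar_cx B \<longleftrightarrow> is_cx B
     \<and> (\<forall>j. card {i. dd B i j \<noteq> 0} \<le> 1)
     \<and> (\<forall>i. card {j. dd B i j \<noteq> 0} \<le> 1)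
     \<and> (\<forall>i j. dd B i j \<noteq> 0 \<longrightarrow> fl B i < fl B j)"

definition bar_rep :: "cx \<Rightarrow> cx \<Rightarrow> bool" where
  "bar_rep B C \<longleftrightarrow> is_bar_cx B \<and> fequiv C B"

text \<open>Even / odd bars: bars (T \<rightarrow> B) whose bottom B has even / odd grading.\<close>
definition even_bars :: "cx \<Rightarrow> nat" where
  "even_bars B = card {(i, j). dd B i j \<noteq> 0 \<and> even (gr B i)}"

definition odd_bars :: "cx \<Rightarrow> nat" where
  "odd_bars B = card {(i, j). dd B i j \<noteq> 0 \<and> odd (gr B i)}"

end

theory Submission
  imports Defs
begin

text \<open>
  The homology of a bar-complex is spanned by its unpaired generators, so a bar-complex
  representative of a complex whose homology is F2 in grading 0 has exactly one unpaired
  generator, and it sits in grading 0. Let \<open>P(t) = \<Sum> t^g\<close>, summed over the gradings \<open>g\<close>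
  of the generators. A bar in gradings \<open>g, g + 1\<close> contributes \<open>t^g + t^(g+1)\<close>, so
  \<open>P(1) = \<delta>\<close>, \<open>P(-1) = 1\<close> and \<open>P'(-1) = b\<^sub>e - b\<^sub>o\<close>.

  Filtered homotopy equivalent complexes whose differentials strictly lower the filtration
  level have the same number of generators in each grading: there \<open>GF = 1 + dH + Hd\<close> is
  unipotent, so \<open>F\<close> is injective. By the Kunneth formula the bar-complex of \<open>K\<^sub>1 # K\<^sub>2\<close> is
  equivalent to the tensor product of those of \<open>K\<^sub>1\<close> and \<open>K\<^sub>2\<close>, hence \<open>P = P\<^sub>1 P\<^sub>2\<close>.
  Evaluating \<open>P\<close> and \<open>P'\<close> at \<open>1\<close> and \<open>-1\<close> gives \<open>\<delta> = \<delta>\<^sub>1 \<delta>\<^sub>2\<close> and the additivity of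
  \<open>b\<^sub>e - b\<^sub>o\<close>; together with \<open>\<delta> = 1 + 2 (b\<^sub>e + b\<^sub>o)\<close> this gives both formulas.
\<close>

section \<open>Linear algebra over F2\<close>

(* The default simp set of HOL-Library.Z2 turns + and * on bit into xor and and;
   here bit is used as the field F2. *)
declare add_bit_eq_xor [simp del] mult_bit_eq_and [simp del]
  bit_not_zero_iff [simp del] bit_not_one_iff [simp del]

lemma bit_add_self [simp]: "(x::bit) + x = 0"
  by (cases x) (simp_all add: add_bit_eq_xor)

lemma bit_add_eq_0_iff: "(x::bit) + y = 0 \<longleftrightarrow> x = y"
  by (cases x; cases y) (simp_all add: add_bit_eq_xor)

lemma bit_add_nonzero: "(x::bit) + y \<noteq> 0 \<Longrightarrow> x \<noteq> 0 \<or> y \<noteq> 0"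
  by auto

lemma mmul_nonzeroD: "mmul n A B i k \<noteq> 0 \<Longrightarrow> \<exists>j<n. A i j \<noteq> 0 \<and> B j k \<noteq> 0"
  unfolding mmul_def by (metis (no_types, lifting) lessThan_iff mult_zero_left mult_zero_right sum.neutral)

lemma app_nonzeroD: "app n A v i \<noteq> 0 \<Longrightarrow> \<exists>j<n. A i j \<noteq> 0 \<and> v j \<noteq> 0"
  unfolding app_def by (metis (no_types, lifting) lessThan_iff mult_zero_left mult_zero_right sum.neutral)

lemma mmul_assoc: "mmul m (mmul n A B) C = mmul n A (mmul m B C)"
  unfolding mmul_def
  by (auto simp: fun_eq_iff sum_distrib_left sum_distrib_right mult.assoc intro: sum.swap)

lemma mmul_add_left:
  "mmul n (\<lambda>i j. A i j + B i j) C = (\<lambda>i j. mmul n A C i j + mmul n B C i j)"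
  unfolding mmul_def by (simp add: fun_eq_iff distrib_right sum.distrib)

lemma mmul_add_right:
  "mmul n A (\<lambda>i j. B i j + C i j) = (\<lambda>i j. mmul n A B i j + mmul n A C i j)"
  unfolding mmul_def by (simp add: fun_eq_iff distrib_left sum.distrib)

lemma idm_nonzeroD: "idm n i j \<noteq> 0 \<Longrightarrow> i = j \<and> i < n"
  unfolding idm_def by (simp split: if_splits)

lemma mmul_idm_left:
  assumes "\<And>i j. A i j \<noteq> 0 \<Longrightarrow> i < n"
  shows "mmul n (idm n) A = A"
proof (intro ext)
  fix i k
  have "mmul n (idm n) A i k = (\<Sum>j<n. if j = i then A i k else 0)"
    unfolding mmul_def idm_def by (intro sum.cong) auto
  then show "mmul n (idm n) A i k = A i k" using assms[of i k] by (cases "i < n") auto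
qed

lemma mmul_idm_right:
  assumes "\<And>i j. A i j \<noteq> 0 \<Longrightarrow> j < n"
  shows "mmul n A (idm n) = A"
proof (intro ext)
  fix i k
  have "mmul n A (idm n) i k = (\<Sum>j<n. if j = k then A i k else 0)"
    unfolding mmul_def idm_def by (intro sum.cong) auto
  then show "mmul n A (idm n) i k = A i k" using assms[of i k] by (cases "k < n") auto
qed

lemma app_mmul: "app n (mmul m A B) v = app m A (app n B v)"
  unfolding mmul_def app_def
  by (auto simp: fun_eq_iff sum_distrib_left sum_distrib_right mult.assoc intro: sum.swap)

lemma app_add_matrix: "app n (\<lambda>i j. A i j + B i j) v = (\<lambda>i. app n A v i + app n B v i)"
  unfolding app_def by (simp add: fun_eq_iff distrib_right sum.distrib)

lemma app_add_vector: "app n A (\<lambda>i. v i + w i) = (\<lambda>i. app n A v i + app n A w i)"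
  unfolding app_def by (simp add: fun_eq_iff distrib_left sum.distrib)

lemma app_zero [simp]: "app n A (\<lambda>i. 0) = (\<lambda>i. 0)"
  unfolding app_def by simp

lemma app_idm:
  assumes "\<And>i. v i \<noteq> 0 \<Longrightarrow> i < n"
  shows "app n (idm n) v = v"
proof (intro ext)
  fix i
  have "app n (idm n) v i = (\<Sum>j<n. if j = i then v i else 0)"
    unfolding app_def idm_def by (intro sum.cong) auto
  then show "app n (idm n) v i = v i" using assms[of i] by (cases "i < n") auto
qed

lemma bit_fun_diff: "(x :: 'a \<Rightarrow> bit) - y = (\<lambda>i. x i + y i)"
  by (simp add: fun_eq_iff)

lemma app_bit_diff: "app n F (x - y) = app n F x - app n F y"
  unfolding bit_fun_diff app_add_vector ..

definition indicator_vec :: "nat set \<Rightarrow> nat \<Rightarrow> bit" where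
  "indicator_vec A i = of_bool (i \<in> A)"

lemma indicator_vec_nonzero_iff [simp]: "indicator_vec A i \<noteq> 0 \<longleftrightarrow> i \<in> A"
  unfolding indicator_vec_def by simp

lemma indicator_vec_support: "indicator_vec {i. v i \<noteq> 0} = v"
  by (auto simp: fun_eq_iff indicator_vec_def bit_not_zero_iff bit_not_one_iff)

section \<open>Filtered chain homotopy equivalence\<close>

lemma is_cx_nonzeroD: "is_cx C \<Longrightarrow> dd C i j \<noteq> 0 \<Longrightarrow> i < dim C \<and> j < dim C"
  unfolding is_cx_def by blast

lemma filt_chain_map_nonzeroD:
  "filt_chain_map C C' F \<Longrightarrow> F i j \<noteq> 0 \<Longrightarrow>
     i < dim C' \<and> j < dim C \<and> gr C' i = gr C j \<and> fl C' i \<le> fl C j"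
  unfolding filt_chain_map_def by blast

lemma filt_chain_map_commute:
  "filt_chain_map C C' F \<Longrightarrow> mmul (dim C') (dd C') F = mmul (dim C) F (dd C)"
  unfolding filt_chain_map_def by blast

lemma filt_htpy_nonzeroD:
  "filt_htpy C H \<Longrightarrow> H i j \<noteq> 0 \<Longrightarrow>
     i < dim C \<and> j < dim C \<and> gr C i = gr C j + 1 \<and> fl C i \<le> fl C j"
  unfolding filt_htpy_def by blast

lemma filt_chain_map_comp:
  assumes F: "filt_chain_map C C' F" and F': "filt_chain_map C' C'' F'"
  shows "filt_chain_map C C'' (mmul (dim C') F' F)"
  unfolding filt_chain_map_def
proof (rule conjI, intro allI impI)
  fix i k assume "mmul (dim C') F' F i k \<noteq> 0"
  then obtain j where "F' i j \<noteq> 0" "F j k \<noteq> 0" using mmul_nonzeroD by blast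
  with filt_chain_map_nonzeroD[OF F] filt_chain_map_nonzeroD[OF F']
  show "i < dim C'' \<and> k < dim C \<and> gr C'' i = gr C k \<and> fl C'' i \<le> fl C k"
    by (metis order_trans)
next
  show "mmul (dim C'') (dd C'') (mmul (dim C') F' F) = mmul (dim C) (mmul (dim C') F' F) (dd C)"
    by (simp add: mmul_assoc[symmetric] filt_chain_map_commute[OF F'])
      (simp add: mmul_assoc filt_chain_map_commute[OF F])
qed

lemma filt_chain_map_idm:
  assumes "is_cx C"
  shows "filt_chain_map C C (idm (dim C))"
proof -
  have "mmul (dim C) (dd C) (idm (dim C)) = mmul (dim C) (idm (dim C)) (dd C)"
    using is_cx_nonzeroD[OF assms] by (simp add: mmul_idm_left mmul_idm_right)
  then show ?thesis unfolding filt_chain_map_def idm_def by auto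
qed

lemma filt_htpy_add:
  assumes "filt_htpy C H" "filt_htpy C H'"
  shows "filt_htpy C (\<lambda>i j. H i j + H' i j)"
  unfolding filt_htpy_def
proof (intro allI impI)
  fix i j assume "H i j + H' i j \<noteq> 0"
  then have "H i j \<noteq> 0 \<or> H' i j \<noteq> 0" by (rule bit_add_nonzero)
  with filt_htpy_nonzeroD[OF assms(1)] filt_htpy_nonzeroD[OF assms(2)]
  show "i < dim C \<and> j < dim C \<and> gr C i = gr C j + 1 \<and> fl C i \<le> fl C j"
    by blast
qed

lemma filt_htpy_conj:
  assumes P: "filt_chain_map B A P" and P': "filt_chain_map A B P'" and L: "filt_htpy B L"
  shows "filt_htpy A (mmul (dim B) P (mmul (dim B) L P'))"
  unfolding filt_htpy_def
proof (intro allI impI)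
  fix i j assume "mmul (dim B) P (mmul (dim B) L P') i j \<noteq> 0"
  then obtain a b where "P i a \<noteq> 0" "L a b \<noteq> 0" "P' b j \<noteq> 0"
    using mmul_nonzeroD by meson
  with filt_chain_map_nonzeroD[OF P this(1)] filt_htpy_nonzeroD[OF L this(2)]
    filt_chain_map_nonzeroD[OF P' this(3)]
  show "i < dim A \<and> j < dim A \<and> gr A i = gr A j + 1 \<and> fl A i \<le> fl A j"
    by auto
qed

lemma htpy_id_comp:
  assumes P': "filt_chain_map A B P'" and P: "filt_chain_map B A P"
    and hL: "htpy_id A (mmul (dim B) P P') L" and hL': "htpy_id B (mmul (dim B') Q Q') L'"
  shows "htpy_id A (mmul (dim B') (mmul (dim B) P Q) (mmul (dim B) Q' P'))
           (\<lambda>i j. L i j + mmul (dim B) P (mmul (dim B) L' P') i j)"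
proof -
  let ?N = "mmul (dim B) P (mmul (dim B) L' P')"
  have eL: "mmul (dim B) P P' =
      (\<lambda>i j. idm (dim A) i j + mmul (dim A) (dd A) L i j + mmul (dim A) L (dd A) i j)"
    using hL unfolding htpy_id_def by blast
  have eL': "mmul (dim B') Q Q' =
      (\<lambda>i j. idm (dim B) i j + mmul (dim B) (dd B) L' i j + mmul (dim B) L' (dd B) i j)"
    using hL' unfolding htpy_id_def by blast
  have P'_idm: "mmul (dim B) (idm (dim B)) P' = P'"
    by (rule mmul_idm_left) (use filt_chain_map_nonzeroD[OF P'] in blast)
  have "mmul (dim B') (mmul (dim B) P Q) (mmul (dim B) Q' P') =
      mmul (dim B) P (mmul (dim B) (mmul (dim B') Q Q') P')"
    by (simp add: mmul_assoc)
  also have "\<dots> = (\<lambda>i j. mmul (dim B) P P' i j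
         + mmul (dim B) P (mmul (dim B) (mmul (dim B) (dd B) L') P') i j
         + mmul (dim B) P (mmul (dim B) (mmul (dim B) L' (dd B)) P') i j)"
    by (simp only: eL' mmul_add_left mmul_add_right P'_idm)
  also have "\<dots> = (\<lambda>i j. idm (dim A) i j + mmul (dim A) (dd A) L i j + mmul (dim A) L (dd A) i j
          + mmul (dim A) (dd A) ?N i j + mmul (dim A) ?N (dd A) i j)"
  proof -
    have "mmul (dim B) P (mmul (dim B) (mmul (dim B) (dd B) L') P') = mmul (dim A) (dd A) ?N"
      by (simp add: mmul_assoc[symmetric] filt_chain_map_commute[OF P, symmetric])
    moreover have "mmul (dim B) P (mmul (dim B) (mmul (dim B) L' (dd B)) P') = mmul (dim A) ?N (dd A)"
      by (simp add: mmul_assoc filt_chain_map_commute[OF P'])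
    ultimately show ?thesis by (simp only: eL)
  qed
  also have "\<dots> = (\<lambda>i j. idm (dim A) i j + mmul (dim A) (dd A) (\<lambda>i j. L i j + ?N i j) i j
          + mmul (dim A) (\<lambda>i j. L i j + ?N i j) (dd A) i j)"
    by (simp add: mmul_add_left mmul_add_right ac_simps)
  finally have e: "mmul (dim B') (mmul (dim B) P Q) (mmul (dim B) Q' P') = \<dots>" .
  have "filt_htpy A (\<lambda>i j. L i j + ?N i j)"
    using hL hL' unfolding htpy_id_def by (blast intro: filt_htpy_add filt_htpy_conj[OF P P'])
  with e show ?thesis unfolding htpy_id_def by blast
qed

lemma fequiv_sym: "fequiv C C' \<Longrightarrow> fequiv C' C"
  unfolding fequiv_def by blast

lemma fequiv_trans:
  assumes "fequiv C C'" "fequiv C' C''"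
  shows "fequiv C C''"
proof -
  from assms(1) obtain F G H H' where F: "filt_chain_map C C' F" and G: "filt_chain_map C' C G"
    and h: "htpy_id C (mmul (dim C') G F) H" and h': "htpy_id C' (mmul (dim C) F G) H'"
    unfolding fequiv_def by blast
  from assms(2) obtain F2 G2 K K' where F2: "filt_chain_map C' C'' F2"
    and G2: "filt_chain_map C'' C' G2"
    and k: "htpy_id C' (mmul (dim C'') G2 F2) K" and k': "htpy_id C'' (mmul (dim C') F2 G2) K'"
    unfolding fequiv_def by blast
  show ?thesis
    unfolding fequiv_def
    using filt_chain_map_comp[OF F F2] filt_chain_map_comp[OF G2 G]
      htpy_id_comp[OF F G h k] htpy_id_comp[OF G2 F2 k' h']
    by blast
qed

section \<open>Tensor products\<close>

lemma sum_lessThan_mult_div_mod: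
  fixes m k :: nat
  shows "(\<Sum>s<m * k. g (s div k) (s mod k)) = (\<Sum>a<m. \<Sum>b<k. g a b)"
proof (induction m)
  case 0
  then show ?case by simp
next
  case (Suc m)
  show ?case
  proof (cases "k = 0")
    case False
    have "(\<Sum>s<Suc m * k. g (s div k) (s mod k)) =
          (\<Sum>s\<in>{0..<m * k}. g (s div k) (s mod k)) + (\<Sum>s\<in>{m * k..<m * k + k}. g (s div k) (s mod k))"
      by (simp add: lessThan_atLeast0 sum.atLeastLessThan_concat add.commute)
    also have "(\<Sum>s\<in>{m * k..<m * k + k}. g (s div k) (s mod k)) = (\<Sum>b<k. g m b)"
      using False sum.shift_bounds_nat_ivl[of "\<lambda>s. g (s div k) (s mod k)" 0 "m * k" k]
      by (simp add: lessThan_atLeast0 add.commute)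
    finally show ?thesis using Suc by (simp add: lessThan_atLeast0)
  qed simp
qed

text \<open>Kronecker product \<open>A \<otimes> B\<close> in the basis ordering \<open>a * rn + b\<close> used by \<open>tensor\<close>:
  \<open>rn\<close> and \<open>cn\<close> are the numbers of rows and columns of \<open>B\<close>, and the entries outside
  the \<open>r \<times> c\<close> block are set to zero.\<close>

definition kron :: "nat \<Rightarrow> nat \<Rightarrow> nat \<Rightarrow> nat \<Rightarrow> mat \<Rightarrow> mat \<Rightarrow> mat" where
  "kron r c rn cn A B = (\<lambda>p q. if p < r \<and> q < c
      then A (p div rn) (q div cn) * B (p mod rn) (q mod cn) else 0)"

lemma kron_nonzeroD:
  "kron r c rn cn A B p q \<noteq> 0 \<Longrightarrow>
     p < r \<and> q < c \<and> A (p div rn) (q div cn) \<noteq> 0 \<and> B (p mod rn) (q mod cn) \<noteq> 0"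
  unfolding kron_def by (auto split: if_splits)

lemma kron_mmul:
  fixes m k :: nat
  shows "mmul (m * k) (kron r (m * k) rn k A B) (kron (m * k) c k cn A' B') =
    kron r c rn cn (mmul m A A') (mmul k B B')"
proof (intro ext)
  fix p q
  show "mmul (m * k) (kron r (m * k) rn k A B) (kron (m * k) c k cn A' B') p q =
    kron r c rn cn (mmul m A A') (mmul k B B') p q"
  proof (cases "p < r \<and> q < c")
    case True
    have "mmul (m * k) (kron r (m * k) rn k A B) (kron (m * k) c k cn A' B') p q
        = (\<Sum>s<m * k. (\<lambda>a b. (A (p div rn) a * A' a (q div cn)) * (B (p mod rn) b * B' b (q mod cn)))
            (s div k) (s mod k))"
      unfolding mmul_def kron_def using True by (intro sum.cong) (auto simp: ac_simps)
    also have "\<dots> = (\<Sum>a<m. \<Sum>b<k. (A (p div rn) a * A' a (q div cn)) * (B (p mod rn) b * B' b (q mod cn)))"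
      by (rule sum_lessThan_mult_div_mod)
    also have "\<dots> = kron r c rn cn (mmul m A A') (mmul k B B') p q"
      unfolding kron_def mmul_def using True by (simp add: sum_product)
    finally show ?thesis .
  qed (auto simp: kron_def mmul_def)
qed

lemma kron_add_left:
  "kron r c rn cn (\<lambda>i j. A i j + A' i j) B = (\<lambda>p q. kron r c rn cn A B p q + kron r c rn cn A' B p q)"
  unfolding kron_def by (auto simp: fun_eq_iff distrib_right)

lemma kron_add_right:
  "kron r c rn cn A (\<lambda>i j. B i j + B' i j) = (\<lambda>p q. kron r c rn cn A B p q + kron r c rn cn A B' p q)"
  unfolding kron_def by (auto simp: fun_eq_iff distrib_left)

lemma kron_idm:
  fixes m k :: nat
  shows "kron (m * k) (m * k) k k (idm m) (idm k) = idm (m * k)"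
proof (intro ext)
  fix p q
  have "p div k = q div k \<and> p mod k = q mod k \<longleftrightarrow> p = q"
    by (metis div_mult_mod_eq)
  moreover have "p < m * k \<Longrightarrow> p div k < m \<and> p mod k < k"
    by (metis less_mult_imp_div_less mod_less_divisor mult_0_right neq0_conv not_less0)
  ultimately show "kron (m * k) (m * k) k k (idm m) (idm k) p q = idm (m * k) p q"
    unfolding kron_def idm_def by auto
qed

lemma tensor_simps:
  "dim (tensor C1 C2) = dim C1 * dim C2"
  "gr (tensor C1 C2) = (\<lambda>p. gr C1 (p div dim C2) + gr C2 (p mod dim C2))"
  "fl (tensor C1 C2) = (\<lambda>p. fl C1 (p div dim C2) + fl C2 (p mod dim C2))"
  unfolding tensor_def Let_def by simp_all

lemma tensor_dd:
  "dd (tensor C1 C2) = (\<lambda>p q.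
      kron (dim C1 * dim C2) (dim C1 * dim C2) (dim C2) (dim C2) (dd C1) (idm (dim C2)) p q
    + kron (dim C1 * dim C2) (dim C1 * dim C2) (dim C2) (dim C2) (idm (dim C1)) (dd C2) p q)"
proof (intro ext)
  fix p q
  have "p < dim C1 * dim C2 \<Longrightarrow> p div dim C2 < dim C1 \<and> p mod dim C2 < dim C2"
    by (metis less_mult_imp_div_less mod_less_divisor mult_0_right neq0_conv not_less0)
  moreover have "q < dim C1 * dim C2 \<Longrightarrow> q div dim C2 < dim C1 \<and> q mod dim C2 < dim C2"
    by (metis less_mult_imp_div_less mod_less_divisor mult_0_right neq0_conv not_less0)
  ultimately show "dd (tensor C1 C2) p q = kron (dim C1 * dim C2) (dim C1 * dim C2) (dim C2) (dim C2) (dd C1) (idm (dim C2)) p q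
    + kron (dim C1 * dim C2) (dim C1 * dim C2) (dim C2) (dim C2) (idm (dim C1)) (dd C2) p q"
    unfolding kron_def idm_def tensor_def Let_def by auto
qed

lemma sum_gr_tensor:
  "(\<Sum>p<dim (tensor C1 C2). f (gr (tensor C1 C2) p)) =
    (\<Sum>a<dim C1. \<Sum>b<dim C2. f (gr C1 a + gr C2 b))"
  unfolding tensor_simps by (rule sum_lessThan_mult_div_mod)

lemma kron_filt_chain_map:
  assumes F1: "filt_chain_map C1 C1' F1" and F2: "filt_chain_map C2 C2' F2"
  shows "filt_chain_map (tensor C1 C2) (tensor C1' C2')
           (kron (dim C1' * dim C2') (dim C1 * dim C2) (dim C2') (dim C2) F1 F2)"
  unfolding filt_chain_map_def
proof (rule conjI, intro allI impI)
  fix p q assume "kron (dim C1' * dim C2') (dim C1 * dim C2) (dim C2') (dim C2) F1 F2 p q \<noteq> 0"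
  from kron_nonzeroD[OF this] filt_chain_map_nonzeroD[OF F1] filt_chain_map_nonzeroD[OF F2]
  show "p < dim (tensor C1' C2') \<and> q < dim (tensor C1 C2) \<and>
      gr (tensor C1' C2') p = gr (tensor C1 C2) q \<and> fl (tensor C1' C2') p \<le> fl (tensor C1 C2) q"
    by (auto simp: tensor_simps intro: add_mono)
next
  have "mmul (dim C1') (idm (dim C1')) F1 = F1" "mmul (dim C1) F1 (idm (dim C1)) = F1"
       "mmul (dim C2') (idm (dim C2')) F2 = F2" "mmul (dim C2) F2 (idm (dim C2)) = F2"
    using filt_chain_map_nonzeroD[OF F1] filt_chain_map_nonzeroD[OF F2]
    by (blast intro: mmul_idm_left mmul_idm_right)+
  then show "mmul (dim (tensor C1' C2')) (dd (tensor C1' C2'))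
      (kron (dim C1' * dim C2') (dim C1 * dim C2) (dim C2') (dim C2) F1 F2) =
    mmul (dim (tensor C1 C2)) (kron (dim C1' * dim C2') (dim C1 * dim C2) (dim C2') (dim C2) F1 F2)
      (dd (tensor C1 C2))"
    by (simp only: tensor_simps tensor_dd mmul_add_left mmul_add_right kron_mmul
        filt_chain_map_commute[OF F1] filt_chain_map_commute[OF F2])
qed

lemma filt_htpy_kron_left:
  assumes H: "filt_htpy C1 H" and P: "filt_chain_map C2 C2 P"
  shows "filt_htpy (tensor C1 C2) (kron (dim C1 * dim C2) (dim C1 * dim C2) (dim C2) (dim C2) H P)"
  unfolding filt_htpy_def
proof (intro allI impI)
  fix p q assume "kron (dim C1 * dim C2) (dim C1 * dim C2) (dim C2) (dim C2) H P p q \<noteq> 0"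
  then have "p < dim C1 * dim C2" "q < dim C1 * dim C2"
    and "H (p div dim C2) (q div dim C2) \<noteq> 0" "P (p mod dim C2) (q mod dim C2) \<noteq> 0"
    by (blast dest: kron_nonzeroD)+
  with filt_htpy_nonzeroD[OF H this(3)] filt_chain_map_nonzeroD[OF P this(4)]
  show "p < dim (tensor C1 C2) \<and> q < dim (tensor C1 C2) \<and>
      gr (tensor C1 C2) p = gr (tensor C1 C2) q + 1 \<and> fl (tensor C1 C2) p \<le> fl (tensor C1 C2) q"
    unfolding tensor_simps by (auto intro: add_mono)
qed

lemma filt_htpy_kron_right:
  assumes P: "filt_chain_map C1 C1 P" and H: "filt_htpy C2 H"
  shows "filt_htpy (tensor C1 C2) (kron (dim C1 * dim C2) (dim C1 * dim C2) (dim C2) (dim C2) P H)"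
  unfolding filt_htpy_def
proof (intro allI impI)
  fix p q assume "kron (dim C1 * dim C2) (dim C1 * dim C2) (dim C2) (dim C2) P H p q \<noteq> 0"
  then have "p < dim C1 * dim C2" "q < dim C1 * dim C2"
    and "P (p div dim C2) (q div dim C2) \<noteq> 0" "H (p mod dim C2) (q mod dim C2) \<noteq> 0"
    by (blast dest: kron_nonzeroD)+
  with filt_chain_map_nonzeroD[OF P this(3)] filt_htpy_nonzeroD[OF H this(4)]
  show "p < dim (tensor C1 C2) \<and> q < dim (tensor C1 C2) \<and>
      gr (tensor C1 C2) p = gr (tensor C1 C2) q + 1 \<and> fl (tensor C1 C2) p \<le> fl (tensor C1 C2) q"
    unfolding tensor_simps by (auto intro: add_mono)
qed

(* P1 \<otimes> P2 - 1 = (P1 - 1) \<otimes> P2 + 1 \<otimes> (P2 - 1); since P2 is a chain map, the two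
   summands are null-homotopic via H1 \<otimes> P2 and 1 \<otimes> H2. *)
lemma kron_htpy_id:
  assumes C1: "is_cx C1" and h1: "htpy_id C1 P1 H1" and h2: "htpy_id C2 P2 H2"
    and P2: "filt_chain_map C2 C2 P2"
  defines "n \<equiv> dim C1 * dim C2"
  shows "htpy_id (tensor C1 C2) (kron n n (dim C2) (dim C2) P1 P2)
     (\<lambda>p q. kron n n (dim C2) (dim C2) H1 P2 p q + kron n n (dim C2) (dim C2) (idm (dim C1)) H2 p q)"
proof -
  let ?m = "dim C1" and ?k = "dim C2"
  let ?K = "kron n n ?k ?k"
  have H1: "filt_htpy C1 H1" and eP1: "P1 = (\<lambda>i j. idm ?m i j + mmul ?m (dd C1) H1 i j + mmul ?m H1 (dd C1) i j)"
    and H2: "filt_htpy C2 H2" and eP2: "P2 = (\<lambda>i j. idm ?k i j + mmul ?k (dd C2) H2 i j + mmul ?k H2 (dd C2) i j)"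
    using h1 h2 unfolding htpy_id_def by blast+
  have htpy: "filt_htpy (tensor C1 C2) (\<lambda>p q. ?K H1 P2 p q + ?K (idm ?m) H2 p q)"
    unfolding n_def
    by (intro filt_htpy_add filt_htpy_kron_left filt_htpy_kron_right filt_chain_map_idm C1 H1 H2 P2)
  have unit_laws:
    "mmul ?m (idm ?m) (dd C1) = dd C1" "mmul ?m (dd C1) (idm ?m) = dd C1"
    "mmul ?m (idm ?m) H1 = H1" "mmul ?m H1 (idm ?m) = H1"
    "mmul ?k (idm ?k) H2 = H2" "mmul ?k H2 (idm ?k) = H2"
    "mmul ?k (idm ?k) P2 = P2" "mmul ?k P2 (idm ?k) = P2" "mmul ?m (idm ?m) (idm ?m) = idm ?m"
    by (intro mmul_idm_left mmul_idm_right;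
        fastforce dest: is_cx_nonzeroD[OF C1] filt_htpy_nonzeroD[OF H1] filt_htpy_nonzeroD[OF H2]
          filt_chain_map_nonzeroD[OF P2] idm_nonzeroD)+
  have "?K P1 P2 = (\<lambda>p q. ?K (idm ?m) P2 p q + ?K (mmul ?m (dd C1) H1) P2 p q + ?K (mmul ?m H1 (dd C1)) P2 p q)"
    by (simp only: eP1 kron_add_left)
  also have "?K (idm ?m) P2 = (\<lambda>p q. idm n p q + ?K (idm ?m) (mmul ?k (dd C2) H2) p q
      + ?K (idm ?m) (mmul ?k H2 (dd C2)) p q)"
    unfolding n_def by (subst (1) eP2) (simp only: kron_add_right kron_idm)
  finally have "?K P1 P2 = (\<lambda>p q. idm n p q
      + mmul n (dd (tensor C1 C2)) (\<lambda>p q. ?K H1 P2 p q + ?K (idm ?m) H2 p q) p q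
      + mmul n (\<lambda>p q. ?K H1 P2 p q + ?K (idm ?m) H2 p q) (dd (tensor C1 C2)) p q)"
    unfolding n_def
    by (simp only: tensor_simps tensor_dd mmul_add_left mmul_add_right kron_mmul unit_laws
        filt_chain_map_commute[OF P2]) (simp add: fun_eq_iff ac_simps)
  with htpy show ?thesis unfolding htpy_id_def tensor_simps n_def by blast
qed

lemma fequiv_tensor:
  assumes "fequiv C1 C1'" "fequiv C2 C2'" "is_cx C1" "is_cx C1'"
  shows "fequiv (tensor C1 C2) (tensor C1' C2')"
proof -
  from assms(1) obtain F1 G1 H1 H1' where F1: "filt_chain_map C1 C1' F1"
    and G1: "filt_chain_map C1' C1 G1"
    and h1: "htpy_id C1 (mmul (dim C1') G1 F1) H1" and h1': "htpy_id C1' (mmul (dim C1) F1 G1) H1'"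
    unfolding fequiv_def by blast
  from assms(2) obtain F2 G2 H2 H2' where F2: "filt_chain_map C2 C2' F2"
    and G2: "filt_chain_map C2' C2 G2"
    and h2: "htpy_id C2 (mmul (dim C2') G2 F2) H2" and h2': "htpy_id C2' (mmul (dim C2) F2 G2) H2'"
    unfolding fequiv_def by blast
  define F where "F = kron (dim C1' * dim C2') (dim C1 * dim C2) (dim C2') (dim C2) F1 F2"
  define G where "G = kron (dim C1 * dim C2) (dim C1' * dim C2') (dim C2) (dim C2') G1 G2"
  have "mmul (dim (tensor C1' C2')) G F = kron (dim C1 * dim C2) (dim C1 * dim C2) (dim C2) (dim C2)
      (mmul (dim C1') G1 F1) (mmul (dim C2') G2 F2)"
    unfolding F_def G_def tensor_simps by (rule kron_mmul)
  moreover have "mmul (dim (tensor C1 C2)) F G = kron (dim C1' * dim C2') (dim C1' * dim C2') (dim C2') (dim C2')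
      (mmul (dim C1) F1 G1) (mmul (dim C2) F2 G2)"
    unfolding F_def G_def tensor_simps by (rule kron_mmul)
  ultimately show ?thesis
    unfolding fequiv_def
    using kron_filt_chain_map[OF F1 F2, folded F_def] kron_filt_chain_map[OF G1 G2, folded G_def]
      kron_htpy_id[OF assms(3) h1 h2 filt_chain_map_comp[OF F2 G2]]
      kron_htpy_id[OF assms(4) h1' h2' filt_chain_map_comp[OF G2 F2]]
    by metis
qed

section \<open>Generators per grading of reduced complexes\<close>

definition reduced :: "cx \<Rightarrow> bool" where
  "reduced C \<longleftrightarrow> (\<forall>i j. dd C i j \<noteq> 0 \<longrightarrow> fl C i < fl C j)"

definition gr_count :: "cx \<Rightarrow> int \<Rightarrow> nat" where
  "gr_count C k = card {i. i < dim C \<and> gr C i = k}"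

lemma reduced_tensor:
  assumes "reduced C1" "reduced C2"
  shows "reduced (tensor C1 C2)"
  unfolding reduced_def
proof (intro allI impI)
  fix p q assume "dd (tensor C1 C2) p q \<noteq> 0"
  then consider
      "idm (dim C2) (p mod dim C2) (q mod dim C2) \<noteq> 0" "dd C1 (p div dim C2) (q div dim C2) \<noteq> 0"
    | "idm (dim C1) (p div dim C2) (q div dim C2) \<noteq> 0" "dd C2 (p mod dim C2) (q mod dim C2) \<noteq> 0"
    unfolding tensor_dd by (metis add_0 add_0_right kron_nonzeroD)
  then show "fl (tensor C1 C2) p < fl (tensor C1 C2) q"
  proof cases
    case 1
    then have "p mod dim C2 = q mod dim C2" "fl C1 (p div dim C2) < fl C1 (q div dim C2)"
      using assms(1) idm_nonzeroD unfolding reduced_def by blast+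
    then show ?thesis unfolding tensor_simps by simp
  next
    case 2
    then have "p div dim C2 = q div dim C2" "fl C2 (p mod dim C2) < fl C2 (q mod dim C2)"
      using assms(2) idm_nonzeroD unfolding reduced_def by blast+
    then show ?thesis unfolding tensor_simps by simp
  qed
qed

lemma fixed_vector_of_raising_matrix_zero:
  fixes f :: "nat \<Rightarrow> 'a::linorder"
  assumes raising: "\<And>i k. N i k \<noteq> 0 \<Longrightarrow> f i < f k"
    and supp: "\<And>i. x i \<noteq> 0 \<Longrightarrow> i < n"
    and fixed: "app n N x = x"
  shows "x = (\<lambda>i. 0)"
proof (rule ccontr)
  assume "x \<noteq> (\<lambda>i. 0)"
  define S where "S = {i. x i \<noteq> 0}"
  have "S \<subseteq> {..<n}" using supp unfolding S_def by blast
  then have "finite S" by (rule finite_subset) simp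
  moreover have "S \<noteq> {}" using \<open>x \<noteq> (\<lambda>i. 0)\<close> unfolding S_def by auto
  ultimately obtain i where "i \<in> S" and i_max: "\<And>j. j \<in> S \<Longrightarrow> f j \<le> f i"
    using Max_in[of "f ` S"] Max_ge[of "f ` S"] by fastforce
  then have "app n N x i \<noteq> 0" using fixed unfolding S_def by simp
  then obtain k where "N i k \<noteq> 0" "k \<in> S" unfolding S_def by (blast dest: app_nonzeroD)
  with raising[of i k] i_max[of k] show False by simp
qed

lemma htpy_id_inj:
  assumes red: "reduced C" and h: "htpy_id C (mmul m G F) H"
    and v: "\<And>i. v i \<noteq> 0 \<Longrightarrow> i < dim C" and w: "\<And>i. w i \<noteq> 0 \<Longrightarrow> i < dim C"
    and eq: "app (dim C) F v = app (dim C) F w"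
  shows "v = w"
proof -
  define x where "x = (\<lambda>i. v i + w i)"
  define N where "N = (\<lambda>i j. mmul (dim C) (dd C) H i j + mmul (dim C) H (dd C) i j)"
  have x_supp: "x i \<noteq> 0 \<Longrightarrow> i < dim C" for i
    using v w bit_add_nonzero unfolding x_def by blast
  have H: "filt_htpy C H" and GF: "mmul m G F = (\<lambda>i j. idm (dim C) i j + N i j)"
    using h unfolding htpy_id_def N_def by (auto simp: add.assoc)
  have "app (dim C) F x = (\<lambda>i. 0)"
    using eq unfolding x_def app_add_vector by simp
  then have "app (dim C) (mmul m G F) x = (\<lambda>i. 0)"
    by (simp add: app_mmul)
  then have "(\<lambda>i. x i + app (dim C) N x i) = (\<lambda>i. 0)"
    unfolding GF app_add_matrix by (simp add: app_idm x_supp)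
  then have "app (dim C) N x = x"
    by (simp add: fun_eq_iff bit_add_eq_0_iff)
  moreover have "fl C i < fl C k" if "N i k \<noteq> 0" for i k
  proof -
    from that consider j where "dd C i j \<noteq> 0" "H j k \<noteq> 0" | j where "H i j \<noteq> 0" "dd C j k \<noteq> 0"
      unfolding N_def by (metis bit_add_nonzero mmul_nonzeroD)
    then show ?thesis
      using red filt_htpy_nonzeroD[OF H] unfolding reduced_def by cases force+
  qed
  ultimately have "x = (\<lambda>i. 0)"
    using fixed_vector_of_raising_matrix_zero x_supp by blast
  then show "v = w"
    unfolding x_def by (simp add: fun_eq_iff bit_add_eq_0_iff)
qed

lemma gr_count_le:
  assumes red: "reduced C" and F: "filt_chain_map C C' F" and h: "htpy_id C (mmul (dim C') G F) H"
  shows "gr_count C k \<le> gr_count C' k"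
proof -
  define S where "S = {i. i < dim C \<and> gr C i = k}"
  define S' where "S' = {i. i < dim C' \<and> gr C' i = k}"
  define \<Psi> where "\<Psi> A = {i. app (dim C) F (indicator_vec A) i \<noteq> 0}" for A
  have "\<Psi> A \<subseteq> S'" if "A \<subseteq> S" for A
  proof
    fix i assume "i \<in> \<Psi> A"
    then obtain j where "F i j \<noteq> 0" "j \<in> A"
      unfolding \<Psi>_def by (auto dest: app_nonzeroD)
    with that filt_chain_map_nonzeroD[OF F \<open>F i j \<noteq> 0\<close>] show "i \<in> S'"
      unfolding S_def S'_def by auto
  qed
  then have "\<Psi> ` Pow S \<subseteq> Pow S'" by blast
  moreover have "inj_on \<Psi> (Pow S)"
  proof (rule inj_onI)
    fix A B assume A: "A \<in> Pow S" and B: "B \<in> Pow S" and "\<Psi> A = \<Psi> B"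
    then have "indicator_vec (\<Psi> A) = indicator_vec (\<Psi> B)" by simp
    then have "app (dim C) F (indicator_vec A) = app (dim C) F (indicator_vec B)"
      unfolding \<Psi>_def indicator_vec_support .
    then have "indicator_vec A = indicator_vec B"
      by (rule htpy_id_inj[OF red h, rotated 2]) (use A B in \<open>auto simp: S_def\<close>)
    then have "{i. indicator_vec A i \<noteq> 0} = {i. indicator_vec B i \<noteq> 0}" by simp
    then show "A = B" by simp
  qed
  ultimately have "card (Pow S) \<le> card (Pow S')"
    by (intro card_inj_on_le) (auto simp: S'_def)
  then show ?thesis
    unfolding gr_count_def by (simp add: card_Pow S_def S'_def)
qed

lemma gr_count_eq:
  assumes "fequiv C C'" "reduced C" "reduced C'"
  shows "gr_count C k = gr_count C' k"
proof -
  from assms(1) obtain F G H H' where "filt_chain_map C C' F" "filt_chain_map C' C G"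
    and "htpy_id C (mmul (dim C') G F) H" "htpy_id C' (mmul (dim C) F G) H'"
    unfolding fequiv_def by blast
  with assms(2,3) show ?thesis
    by (intro le_antisym gr_count_le)
qed

lemma sum_gr_by_gr_count:
  fixes f :: "int \<Rightarrow> 'a::comm_semiring_1"
  shows "(\<Sum>i<dim C. f (gr C i)) = (\<Sum>k\<in>gr C ` {..<dim C}. of_nat (gr_count C k) * f k)"
proof -
  have "(\<Sum>i<dim C. f (gr C i)) = (\<Sum>k\<in>gr C ` {..<dim C}. \<Sum>i\<in>{i\<in>{..<dim C}. gr C i = k}. f (gr C i))"
    by (rule sum.image_gen) simp
  also have "\<dots> = (\<Sum>k\<in>gr C ` {..<dim C}. \<Sum>i\<in>{i. i < dim C \<and> gr C i = k}. f k)"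
    by (intro sum.cong) auto
  finally show ?thesis
    unfolding gr_count_def by simp
qed

lemma gr_count_nonzero_iff: "gr_count C k \<noteq> 0 \<longleftrightarrow> k \<in> gr C ` {..<dim C}"
proof -
  have "finite {i. i < dim C \<and> gr C i = k}" by simp
  then show ?thesis
    unfolding gr_count_def card_eq_0_iff by blast
qed

lemma sum_gr_eq_if_gr_count_eq:
  fixes f :: "int \<Rightarrow> 'a::comm_semiring_1"
  assumes "\<And>k. gr_count C k = gr_count C' k"
  shows "(\<Sum>i<dim C. f (gr C i)) = (\<Sum>i<dim C'. f (gr C' i))"
proof -
  have "gr C ` {..<dim C} = gr C' ` {..<dim C'}"
    unfolding set_eq_iff gr_count_nonzero_iff[symmetric] assms by simp
  then show ?thesis
    unfolding sum_gr_by_gr_count assms by simp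
qed

section \<open>Homology\<close>

definition hrel :: "cx \<Rightarrow> int \<Rightarrow> ((nat \<Rightarrow> bit) \<times> (nat \<Rightarrow> bit)) set" where
  "hrel C k = {(x, y). x \<in> cycles C k \<and> y \<in> cycles C k \<and> x - y \<in> boundaries C k}"

lemma homology_eq_quotient: "homology C k = cycles C k // hrel C k"
  unfolding homology_def hrel_def ..

lemma zero_in_boundaries: "(\<lambda>i. 0) \<in> boundaries C k"
  unfolding boundaries_def by (rule CollectI, rule exI[of _ "\<lambda>i. 0"]) simp

lemma add_in_boundaries:
  assumes "a \<in> boundaries C k" "b \<in> boundaries C k"
  shows "(\<lambda>i. a i + b i) \<in> boundaries C k"
proof -
  obtain v where v: "a = app (dim C) (dd C) v" "\<And>i. v i \<noteq> 0 \<Longrightarrow> i < dim C \<and> gr C i = k + 1"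
    using assms(1) unfolding boundaries_def by blast
  obtain w where w: "b = app (dim C) (dd C) w" "\<And>i. w i \<noteq> 0 \<Longrightarrow> i < dim C \<and> gr C i = k + 1"
    using assms(2) unfolding boundaries_def by blast
  have "(\<lambda>i. a i + b i) = app (dim C) (dd C) (\<lambda>i. v i + w i)"
    unfolding v(1) w(1) app_add_vector ..
  moreover have "i < dim C \<and> gr C i = k + 1" if "v i + w i \<noteq> 0" for i
    using that v(2) w(2) bit_add_nonzero by blast
  ultimately show ?thesis unfolding boundaries_def by blast
qed

lemma equiv_hrel: "equiv (cycles C k) (hrel C k)"
proof (rule equivI)
  show "refl_on (cycles C k) (hrel C k)"
    by (rule refl_onI) (auto simp: hrel_def bit_fun_diff zero_in_boundaries)
  show "sym (hrel C k)"
    by (rule symI) (auto simp: hrel_def bit_fun_diff add.commute)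
  show "trans (hrel C k)"
  proof (rule transI)
    fix x y z assume xy: "(x, y) \<in> hrel C k" and yz: "(y, z) \<in> hrel C k"
    then have "(\<lambda>i. (x - y) i + (y - z) i) \<in> boundaries C k"
      unfolding hrel_def by (blast intro: add_in_boundaries)
    moreover have "(\<lambda>i. (x - y) i + (y - z) i) = x - z"
      by (simp add: fun_eq_iff add.assoc)
    ultimately show "(x, z) \<in> hrel C k"
      using xy yz unfolding hrel_def by auto
  qed
qed (auto simp: hrel_def)

lemma finite_homology: "finite (homology C k)"
proof -
  have "cycles C k \<subseteq> indicator_vec ` Pow {..<dim C}"
  proof
    fix v assume "v \<in> cycles C k"
    then have "{i. v i \<noteq> 0} \<in> Pow {..<dim C}" unfolding cycles_def by auto
    then show "v \<in> indicator_vec ` Pow {..<dim C}"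
      by (rule image_eqI[where f = indicator_vec, OF indicator_vec_support[of v, symmetric]])
  qed
  then have "finite (cycles C k)" by (rule finite_subset) simp
  then show ?thesis
    unfolding homology_eq_quotient by (rule finite_quotient) (auto simp: hrel_def)
qed

lemma card_quotient_le:
  assumes eq: "equiv Z R" and eq': "equiv Z' R'" and fin: "finite (Z' // R')"
    and f: "\<And>x. x \<in> Z \<Longrightarrow> f x \<in> Z'"
    and f_resp: "\<And>x y. (x, y) \<in> R \<Longrightarrow> (f x, f y) \<in> R'"
    and g_resp: "\<And>x y. (x, y) \<in> R' \<Longrightarrow> (g x, g y) \<in> R"
    and gf: "\<And>x. x \<in> Z \<Longrightarrow> (g (f x), x) \<in> R"
  shows "card (Z // R) \<le> card (Z' // R')"
proof -
  define \<Phi> where "\<Phi> X = R' `` (f ` X)" for X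
  have Phi_class: "\<Phi> (R `` {x}) = R' `` {f x}" if x: "x \<in> Z" for x
  proof
    show "\<Phi> (R `` {x}) \<subseteq> R' `` {f x}"
      using eq' f_resp unfolding \<Phi>_def equiv_def trans_def by blast
    show "R' `` {f x} \<subseteq> \<Phi> (R `` {x})"
      using eq x unfolding \<Phi>_def equiv_def refl_on_def by blast
  qed
  have "inj_on \<Phi> (Z // R)"
  proof (rule inj_onI)
    fix X Y assume "X \<in> Z // R" "Y \<in> Z // R" and e: "\<Phi> X = \<Phi> Y"
    then obtain x y where x: "x \<in> Z" "X = R `` {x}" and y: "y \<in> Z" "Y = R `` {y}"
      by (auto elim!: quotientE)
    have "R' `` {f x} = R' `` {f y}" using e Phi_class x y by simp
    then have "(f x, f y) \<in> R'" using eq' f x(1) f y(1) by (simp add: eq_equiv_class_iff)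
    then have "(g (f x), g (f y)) \<in> R" by (rule g_resp)
    then have "(x, y) \<in> R" using gf[OF x(1)] gf[OF y(1)] eq unfolding equiv_def
      by (meson symD transD)
    then show "X = Y" using x y eq by (simp add: equiv_class_eq)
  qed
  moreover have "\<Phi> ` (Z // R) \<subseteq> Z' // R'"
  proof
    fix W assume "W \<in> \<Phi> ` (Z // R)"
    then obtain x where "x \<in> Z" "W = \<Phi> (R `` {x})" by (auto elim!: quotientE)
    then show "W \<in> Z' // R'" using Phi_class f by (simp add: quotientI)
  qed
  ultimately show ?thesis by (rule card_inj_on_le[OF _ _ fin])
qed

lemma filt_chain_map_cycles:
  assumes F: "filt_chain_map C C' F" and x: "x \<in> cycles C k"
  shows "app (dim C) F x \<in> cycles C' k"
proof -
  have supp: "\<And>i. x i \<noteq> 0 \<Longrightarrow> i < dim C \<and> gr C i = k" and dx: "app (dim C) (dd C) x = (\<lambda>i. 0)"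
    using x unfolding cycles_def by blast+
  have "i < dim C' \<and> gr C' i = k" if "app (dim C) F x i \<noteq> 0" for i
    using app_nonzeroD[OF that] filt_chain_map_nonzeroD[OF F] supp by metis
  moreover have "app (dim C') (dd C') (app (dim C) F x) = (\<lambda>i. 0)"
    by (simp flip: app_mmul add: filt_chain_map_commute[OF F]) (simp add: app_mmul dx)
  ultimately show ?thesis unfolding cycles_def by blast
qed

lemma filt_chain_map_boundaries:
  assumes F: "filt_chain_map C C' F" and x: "x \<in> boundaries C k"
  shows "app (dim C) F x \<in> boundaries C' k"
proof -
  obtain w where w: "x = app (dim C) (dd C) w" "\<And>i. w i \<noteq> 0 \<Longrightarrow> i < dim C \<and> gr C i = k + 1"
    using x unfolding boundaries_def by blast
  have "i < dim C' \<and> gr C' i = k + 1" if "app (dim C) F w i \<noteq> 0" for i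
    using app_nonzeroD[OF that] filt_chain_map_nonzeroD[OF F] w(2) by metis
  moreover have "app (dim C) F x = app (dim C') (dd C') (app (dim C) F w)"
    unfolding w(1) by (simp flip: app_mmul add: filt_chain_map_commute[OF F])
  ultimately show ?thesis unfolding boundaries_def by blast
qed

lemma filt_chain_map_hrel:
  assumes "filt_chain_map C C' F" "(x, y) \<in> hrel C k"
  shows "(app (dim C) F x, app (dim C) F y) \<in> hrel C' k"
  using assms filt_chain_map_cycles filt_chain_map_boundaries
  unfolding hrel_def by (auto simp flip: app_bit_diff)

lemma htpy_id_hrel:
  assumes F: "filt_chain_map C C' F" and G: "filt_chain_map C' C G"
    and h: "htpy_id C (mmul (dim C') G F) H" and x: "x \<in> cycles C k"
  shows "(app (dim C') G (app (dim C) F x), x) \<in> hrel C k"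
proof -
  have supp: "\<And>i. x i \<noteq> 0 \<Longrightarrow> i < dim C \<and> gr C i = k" and dx: "app (dim C) (dd C) x = (\<lambda>i. 0)"
    using x unfolding cycles_def by blast+
  have H: "filt_htpy C H" and GF: "mmul (dim C') G F =
      (\<lambda>i j. idm (dim C) i j + mmul (dim C) (dd C) H i j + mmul (dim C) H (dd C) i j)"
    using h unfolding htpy_id_def by blast+
  have "app (dim C') G (app (dim C) F x) = (\<lambda>i. x i + app (dim C) (dd C) (app (dim C) H x) i)"
    unfolding app_mmul[symmetric] GF app_add_matrix using supp
    by (simp add: app_idm app_mmul dx)
  then have "app (dim C') G (app (dim C) F x) - x = app (dim C) (dd C) (app (dim C) H x)"
    by (simp add: fun_eq_iff add.commute)
  moreover have "i < dim C \<and> gr C i = k + 1" if "app (dim C) H x i \<noteq> 0" for i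
    using app_nonzeroD[OF that] filt_htpy_nonzeroD[OF H] supp by force
  ultimately have "app (dim C') G (app (dim C) F x) - x \<in> boundaries C k"
    unfolding boundaries_def by blast
  with x filt_chain_map_cycles[OF G filt_chain_map_cycles[OF F x]] show ?thesis
    unfolding hrel_def by blast
qed

lemma card_homology_le:
  assumes F: "filt_chain_map C C' F" and G: "filt_chain_map C' C G"
    and h: "htpy_id C (mmul (dim C') G F) H"
  shows "card (homology C k) \<le> card (homology C' k)"
  unfolding homology_eq_quotient
proof (rule card_quotient_le[OF equiv_hrel equiv_hrel])
  show "finite (cycles C' k // hrel C' k)"
    using finite_homology unfolding homology_eq_quotient .
qed (fact filt_chain_map_cycles[OF F] filt_chain_map_hrel[OF F] filt_chain_map_hrel[OF G]
      htpy_id_hrel[OF F G h])+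

lemma card_homology_eq:
  assumes "fequiv C C'"
  shows "card (homology C k) = card (homology C' k)"
proof -
  from assms obtain F G H H' where "filt_chain_map C C' F" "filt_chain_map C' C G"
    and "htpy_id C (mmul (dim C') G F) H" "htpy_id C' (mmul (dim C) F G) H'"
    unfolding fequiv_def by blast
  then show ?thesis
    by (intro le_antisym card_homology_le)
qed

section \<open>Bar-complexes\<close>

definition unpaired :: "cx \<Rightarrow> nat \<Rightarrow> bool" where
  "unpaired B u \<longleftrightarrow> u < dim B \<and> (\<forall>j. dd B u j = 0) \<and> (\<forall>i. dd B i u = 0)"

lemma finite_unpaired [simp]: "finite {u. unpaired B u}"
  by (rule finite_subset[of _ "{..<dim B}"]) (auto simp: unpaired_def)

lemma indicator_vec_unpaired_cycle:
  assumes "A \<subseteq> {u. unpaired B u \<and> gr B u = k}"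
  shows "indicator_vec A \<in> cycles B k"
proof -
  have "app (dim B) (dd B) (indicator_vec A) = (\<lambda>i. 0)"
    using assms unfolding unpaired_def app_def indicator_vec_def
    by (auto simp: fun_eq_iff intro!: sum.neutral)
  with assms show ?thesis unfolding cycles_def unpaired_def by auto
qed

lemma not_hrel_if_differ_at_unpaired:
  assumes u: "unpaired B u" and "x u \<noteq> y u"
  shows "(x, y) \<notin> hrel B k"
proof
  assume "(x, y) \<in> hrel B k"
  then obtain w where "x - y = app (dim B) (dd B) w"
    unfolding hrel_def boundaries_def by blast
  then have "x u + y u = app (dim B) (dd B) w u"
    by (simp add: fun_eq_iff)
  also have "\<dots> = 0"
    using u unfolding unpaired_def app_def by simp
  finally show False using \<open>x u \<noteq> y u\<close> by (simp add: bit_add_eq_0_iff)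
qed

lemma two_pow_card_unpaired_le_card_homology:
  "2 ^ card {u. unpaired B u \<and> gr B u = k} \<le> card (homology B k)"
proof -
  let ?U = "{u. unpaired B u \<and> gr B u = k}" and ?R = "hrel B k"
  define cls where "cls A = ?R `` {indicator_vec A}" for A
  have "finite ?U" by simp
  have "inj_on cls (Pow ?U)"
  proof (rule inj_onI)
    fix A A' assume A: "A \<in> Pow ?U" and A': "A' \<in> Pow ?U" and "cls A = cls A'"
    then have rel: "(indicator_vec A, indicator_vec A') \<in> ?R"
      unfolding cls_def using eq_equiv_class_iff[OF equiv_hrel
        indicator_vec_unpaired_cycle indicator_vec_unpaired_cycle] by blast
    show "A = A'"
    proof (rule ccontr)
      assume "A \<noteq> A'"
      then obtain u where "u \<in> A \<union> A'" "u \<in> A \<longleftrightarrow> u \<notin> A'"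
        by blast
      moreover from this(2) have "indicator_vec A u \<noteq> indicator_vec A' u"
        by (cases "u \<in> A") (simp_all add: indicator_vec_def)
      ultimately have "(indicator_vec A, indicator_vec A') \<notin> ?R"
        using A A' by (intro not_hrel_if_differ_at_unpaired) auto
      with rel show False by contradiction
    qed
  qed
  moreover have "cls ` Pow ?U \<subseteq> homology B k"
    unfolding homology_eq_quotient cls_def
    using indicator_vec_unpaired_cycle by (auto intro: quotientI)
  ultimately have "card (Pow ?U) \<le> card (homology B k)"
    by (intro card_inj_on_le finite_homology)
  with \<open>finite ?U\<close> show ?thesis by (simp add: card_Pow)
qed

lemma bar_cx_nonzeroD:
  "is_bar_cx B \<Longrightarrow> dd B i j \<noteq> 0 \<Longrightarrow>
     i < dim B \<and> j < dim B \<and> gr B i + 1 = gr B j \<and> fl B i < fl B j"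
  unfolding is_bar_cx_def is_cx_def by blast

lemma bar_cx_reduced: "is_bar_cx B \<Longrightarrow> reduced B"
  unfolding reduced_def using bar_cx_nonzeroD by blast

lemma bar_cx_row_unique:
  assumes B: "is_bar_cx B" and "dd B i j \<noteq> 0" "dd B i j' \<noteq> 0"
  shows "j = j'"
proof -
  have "finite {j. dd B i j \<noteq> 0}"
    by (rule finite_subset[of _ "{..<dim B}"]) (use bar_cx_nonzeroD[OF B] in auto)
  moreover have "card {j. dd B i j \<noteq> 0} \<le> 1"
    using B unfolding is_bar_cx_def by blast
  ultimately show ?thesis
    using assms(2,3) card_le_Suc0_iff_eq by fastforce
qed

lemma bar_cx_col_unique:
  assumes B: "is_bar_cx B" and "dd B i j \<noteq> 0" "dd B i' j \<noteq> 0"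
  shows "i = i'"
proof -
  have "finite {i. dd B i j \<noteq> 0}"
    by (rule finite_subset[of _ "{..<dim B}"]) (use bar_cx_nonzeroD[OF B] in auto)
  moreover have "card {i. dd B i j \<noteq> 0} \<le> 1"
    using B unfolding is_bar_cx_def by blast
  ultimately show ?thesis
    using assms(2,3) card_le_Suc0_iff_eq by fastforce
qed

lemma bar_cx_mmul_single:
  assumes B: "is_bar_cx B" and ij: "dd B i j \<noteq> 0"
  shows "mmul (dim B) (dd B) M i k = M j k"
proof -
  have "mmul (dim B) (dd B) M i k = dd B i j * M j k"
    unfolding mmul_def
  proof (rule sum.remove[THEN trans])
    show "j \<in> {..<dim B}" using bar_cx_nonzeroD[OF B ij] by simp
    have "dd B i l = 0" if "l \<noteq> j" for l
      using bar_cx_row_unique[OF B ij, of l] that by blast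
    then show "dd B i j * M j k + (\<Sum>l\<in>{..<dim B} - {j}. dd B i l * M l k) = dd B i j * M j k"
      by simp
  qed simp
  with ij show ?thesis by (simp add: bit_not_zero_iff)
qed

lemma bar_cx_app_single:
  assumes B: "is_bar_cx B" and ij: "dd B i j \<noteq> 0"
  shows "app (dim B) (dd B) v i = v j"
proof -
  have "app (dim B) (dd B) v i = dd B i j * v j"
    unfolding app_def
  proof (rule sum.remove[THEN trans])
    show "j \<in> {..<dim B}" using bar_cx_nonzeroD[OF B ij] by simp
    have "dd B i l = 0" if "l \<noteq> j" for l
      using bar_cx_row_unique[OF B ij, of l] that by blast
    then show "dd B i j * v j + (\<Sum>l\<in>{..<dim B} - {j}. dd B i l * v l) = dd B i j * v j"
      by simp
  qed simp
  with ij show ?thesis by (simp add: bit_not_zero_iff)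
qed

lemma bar_cx_not_composable:
  assumes B: "is_bar_cx B" and "dd B a b \<noteq> 0" "dd B b c \<noteq> 0"
  shows False
proof -
  have "mmul (dim B) (dd B) (dd B) a c = dd B b c"
    by (rule bar_cx_mmul_single[OF B \<open>dd B a b \<noteq> 0\<close>])
  moreover have "mmul (dim B) (dd B) (dd B) = (\<lambda>i k. 0)"
    using B unfolding is_bar_cx_def is_cx_def by blast
  ultimately show False using \<open>dd B b c \<noteq> 0\<close> by simp
qed

lemma bar_cx_cycle_boundary:
  assumes B: "is_bar_cx B" and no_unpaired: "\<And>u. unpaired B u \<Longrightarrow> gr B u \<noteq> k"
    and v: "v \<in> cycles B k"
  shows "v \<in> boundaries B k"
proof -
  have supp: "\<And>i. v i \<noteq> 0 \<Longrightarrow> i < dim B \<and> gr B i = k" and dv: "app (dim B) (dd B) v = (\<lambda>i. 0)"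
    using v unfolding cycles_def by blast+
  have top_zero: "v j = 0" if "dd B i j \<noteq> 0" for i j
    using bar_cx_app_single[OF B that, of v] dv by (simp add: fun_eq_iff)
  \<comment> \<open>each bottom in the support of \<open>v\<close> is hit by the top of its bar\<close>
  define w where "w j = (of_bool (\<exists>i. dd B i j \<noteq> 0 \<and> v i \<noteq> 0) :: bit)" for j
  have "j < dim B \<and> gr B j = k + 1" if "w j \<noteq> 0" for j
  proof -
    from that obtain i where "dd B i j \<noteq> 0" "v i \<noteq> 0"
      unfolding w_def by (cases "\<exists>i. dd B i j \<noteq> 0 \<and> v i \<noteq> 0") auto
    with bar_cx_nonzeroD[OF B \<open>dd B i j \<noteq> 0\<close>] supp[OF \<open>v i \<noteq> 0\<close>] show ?thesis
      by simp
  qed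
  moreover have "app (dim B) (dd B) w = v"
  proof
    fix i
    show "app (dim B) (dd B) w i = v i"
    proof (cases "\<exists>j. dd B i j \<noteq> 0")
      case True
      then obtain j where j: "dd B i j \<noteq> 0" by blast
      have "(\<exists>i'. dd B i' j \<noteq> 0 \<and> v i' \<noteq> 0) \<longleftrightarrow> v i \<noteq> 0"
        using j bar_cx_col_unique[OF B j] by blast
      then show ?thesis
        unfolding bar_cx_app_single[OF B j] w_def by (cases "v i") simp_all
    next
      case False
      then have "v i = 0"
        using supp[of i] top_zero[of _ i] no_unpaired[of i] unfolding unpaired_def by blast
      with False show ?thesis by (simp add: app_def)
    qed
  qed
  ultimately show ?thesis unfolding boundaries_def by blast
qed

lemma card_homology_bar_cx_no_unpaired:
  assumes "is_bar_cx B" "\<And>u. unpaired B u \<Longrightarrow> gr B u \<noteq> k"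
  shows "card (homology B k) = 1"
proof -
  have zero: "(\<lambda>i. 0) \<in> cycles B k"
    unfolding cycles_def by simp
  have rel0: "(v, \<lambda>i. 0) \<in> hrel B k" if "v \<in> cycles B k" for v
    using bar_cx_cycle_boundary[OF assms that] that zero unfolding hrel_def by (simp add: bit_fun_diff)
  have "cycles B k // hrel B k = {hrel B k `` {\<lambda>i. 0}}"
  proof (intro equalityI subsetI)
    fix X assume "X \<in> cycles B k // hrel B k"
    then obtain v where "v \<in> cycles B k" "X = hrel B k `` {v}" by (auto elim: quotientE)
    then show "X \<in> {hrel B k `` {\<lambda>i. 0}}" using equiv_class_eq[OF equiv_hrel rel0] by simp
  qed (use quotientI[OF zero] in simp)
  then show ?thesis unfolding homology_eq_quotient by simp
qed

lemma bar_rep_unique_unpaired: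
  assumes B: "is_bar_cx B" and "fequiv C B" and "hom_one_in_zero C"
  obtains u0 where "{u. unpaired B u} = {u0}" and "gr B u0 = 0"
proof -
  let ?U = "\<lambda>k. {u. unpaired B u \<and> gr B u = k}"
  have card_hom: "card (homology B k) = (if k = 0 then 2 else 1)" for k
    using card_homology_eq[OF assms(2), of k] assms(3) unfolding hom_one_in_zero_def by auto
  have fin: "finite (?U k)" for k by simp
  have "?U k = {}" if "k \<noteq> 0" for k
  proof -
    have "2 ^ card (?U k) \<le> (2::nat) ^ 0"
      using two_pow_card_unpaired_le_card_homology[of B k] card_hom[of k] that by simp
    then have "card (?U k) = 0" by (simp only: power_increasing_iff)
    with fin[of k] show ?thesis by simp
  qed
  then have all_zero: "{u. unpaired B u} = ?U 0" by blast
  have "?U 0 \<noteq> {}"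
  proof
    assume "?U 0 = {}"
    then have "card (homology B 0) = 1"
      by (intro card_homology_bar_cx_no_unpaired[OF B]) blast
    with card_hom[of 0] show False by simp
  qed
  with fin[of 0] have "card (?U 0) \<noteq> 0" by simp
  moreover have "2 ^ card (?U 0) \<le> (2::nat) ^ 1"
    using two_pow_card_unpaired_le_card_homology[of B 0] card_hom[of 0] by simp
  ultimately have "card (?U 0) = 1"
    by (simp only: power_increasing_iff)
  then obtain u0 where "?U 0 = {u0}" by (rule card_1_singletonE)
  with all_zero show thesis by (intro that) auto
qed

definition bars :: "cx \<Rightarrow> (nat \<times> nat) set" where
  "bars B = {(i, j). dd B i j \<noteq> 0}"

lemma finite_bars: "is_bar_cx B \<Longrightarrow> finite (bars B)"
  by (rule finite_subset[of _ "{..<dim B} \<times> {..<dim B}"]) (auto simp: bars_def dest: bar_cx_nonzeroD)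

lemma sum_gr_bar_cx:
  fixes f :: "int \<Rightarrow> 'a::comm_monoid_add"
  assumes B: "is_bar_cx B"
  shows "(\<Sum>i<dim B. f (gr B i)) =
    (\<Sum>u\<in>{u. unpaired B u}. f (gr B u)) + (\<Sum>p\<in>bars B. f (gr B (fst p)) + f (gr B (fst p) + 1))"
proof -
  let ?P = "bars B" and ?U = "{u. unpaired B u}"
  have fin_P: "finite ?P"
    by (rule finite_bars[OF B])
  have fin_U: "finite ?U" by simp
  have split: "{..<dim B} = ?U \<union> (fst ` ?P \<union> snd ` ?P)"
    using bar_cx_nonzeroD[OF B] by (force simp: unpaired_def bars_def)
  have disj_U: "?U \<inter> (fst ` ?P \<union> snd ` ?P) = {}"
    by (force simp: unpaired_def bars_def)
  have disj_P: "fst ` ?P \<inter> snd ` ?P = {}"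
    using bar_cx_not_composable[OF B] by (force simp: bars_def)
  have "inj_on fst ?P"
    by (rule inj_onI) (auto simp: bars_def dest: bar_cx_row_unique[OF B])
  moreover have "inj_on snd ?P"
    by (rule inj_onI) (auto simp: bars_def dest: bar_cx_col_unique[OF B])
  ultimately have "(\<Sum>i<dim B. f (gr B i)) = (\<Sum>u\<in>?U. f (gr B u)) +
      ((\<Sum>p\<in>?P. f (gr B (fst p))) + (\<Sum>p\<in>?P. f (gr B (snd p))))"
    unfolding split using fin_P fin_U disj_U disj_P
    by (simp add: sum.union_disjoint sum.reindex)
  also have "(\<Sum>p\<in>?P. f (gr B (snd p))) = (\<Sum>p\<in>?P. f (gr B (fst p) + 1))"
    by (rule sum.cong) (auto simp: bars_def dest: bar_cx_nonzeroD[OF B])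
  finally show ?thesis
    by (simp add: sum.distrib)
qed

(* alt g and alt_deriv g are t^g and its derivative at t = -1, so their sums over the
   generators are P(-1) and P'(-1) for P(t) = \<Sum> t^(gr i). *)
definition alt :: "int \<Rightarrow> int" where
  "alt g = (if even g then 1 else -1)"

definition alt_deriv :: "int \<Rightarrow> int" where
  "alt_deriv g = - alt g * g"

lemma alt_add: "alt (g + h) = alt g * alt h"
  unfolding alt_def by auto

lemma alt_deriv_add: "alt_deriv (g + h) = alt_deriv g * alt h + alt g * alt_deriv h"
  unfolding alt_deriv_def alt_add by (simp add: algebra_simps)

lemma alt_bar: "alt g + alt (g + 1) = 0"
  unfolding alt_def by auto

lemma alt_deriv_bar: "alt_deriv g + alt_deriv (g + 1) = alt g"
  unfolding alt_deriv_def alt_def by auto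

lemma bar_rep_invariants:
  assumes "bar_rep B C" "hom_one_in_zero C"
  shows "int (dim B) = 1 + 2 * (int (even_bars B) + int (odd_bars B))"
    and "(\<Sum>i<dim B. alt (gr B i)) = 1"
    and "(\<Sum>i<dim B. alt_deriv (gr B i)) = int (even_bars B) - int (odd_bars B)"
proof -
  have B: "is_bar_cx B" using assms(1) unfolding bar_rep_def by blast
  obtain u0 where "{u. unpaired B u} = {u0}" "gr B u0 = 0"
    using bar_rep_unique_unpaired B assms unfolding bar_rep_def by metis
  then have sum: "(\<Sum>i<dim B. f (gr B i)) = f 0 + (\<Sum>p\<in>bars B. f (gr B (fst p)) + f (gr B (fst p) + 1))"
    for f :: "int \<Rightarrow> int"
    using sum_gr_bar_cx[OF B, of f] by simp
  let ?E = "{p \<in> bars B. even (gr B (fst p))}" and ?O = "{p \<in> bars B. odd (gr B (fst p))}"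
  from finite_bars[OF B] have fin: "finite ?E" "finite ?O" by simp_all
  have bars_split: "bars B = ?E \<union> ?O" "?E \<inter> ?O = {}" by auto
  have E: "even_bars B = card ?E" and O: "odd_bars B = card ?O"
    unfolding even_bars_def odd_bars_def bars_def by (auto intro!: arg_cong[where f = card])
  have "card (bars B) = even_bars B + odd_bars B"
    unfolding E O by (subst bars_split(1)) (rule card_Un_disjoint[OF fin bars_split(2)])
  then show "int (dim B) = 1 + 2 * (int (even_bars B) + int (odd_bars B))"
    using sum[of "\<lambda>_. 1"] by simp
  show "(\<Sum>i<dim B. alt (gr B i)) = 1"
    unfolding sum alt_bar by (simp add: alt_def)
  have "(\<Sum>i<dim B. alt_deriv (gr B i)) = (\<Sum>p\<in>bars B. alt (gr B (fst p)))"
    unfolding sum alt_deriv_bar by (simp add: alt_deriv_def)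
  also have "\<dots> = (\<Sum>p\<in>?E. alt (gr B (fst p))) + (\<Sum>p\<in>?O. alt (gr B (fst p)))"
    by (subst bars_split(1)) (rule sum.union_disjoint[OF fin bars_split(2)])
  also have "\<dots> = int (even_bars B) - int (odd_bars B)"
    unfolding E O by (simp add: alt_def)
  finally show "(\<Sum>i<dim B. alt_deriv (gr B i)) = int (even_bars B) - int (odd_bars B)" .
qed

lemma sum_gr_bar_rep_tensor:
  fixes f :: "int \<Rightarrow> 'a::comm_semiring_1"
  assumes rep1: "bar_rep B1 C1" and rep2: "bar_rep B2 C2" and rep: "bar_rep B C"
    and kunneth: "fequiv C (tensor C1 C2)" and C1: "is_cx C1"
  shows "(\<Sum>i<dim B. f (gr B i)) = (\<Sum>a<dim B1. \<Sum>b<dim B2. f (gr B1 a + gr B2 b))"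
proof -
  have bar: "is_bar_cx B1" "is_bar_cx B2" "is_bar_cx B"
    and eqv: "fequiv C1 B1" "fequiv C2 B2" "fequiv C B"
    using rep1 rep2 rep unfolding bar_rep_def by blast+
  have "fequiv (tensor C1 C2) (tensor B1 B2)"
    using fequiv_tensor eqv(1,2) C1 bar(1) unfolding is_bar_cx_def by blast
  then have "fequiv B (tensor B1 B2)"
    using fequiv_sym fequiv_trans kunneth eqv(3) by metis
  then have "gr_count B k = gr_count (tensor B1 B2) k" for k
    using bar by (intro gr_count_eq bar_cx_reduced reduced_tensor)
  then show ?thesis
    unfolding sum_gr_tensor[symmetric] by (rule sum_gr_eq_if_gr_count_eq)
qed

lemma bar_rep_tensor_counts:
  assumes rep1: "bar_rep B1 C1" and rep2: "bar_rep B2 C2" and rep: "bar_rep B C"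
    and hom: "hom_one_in_zero C1" "hom_one_in_zero C2" "hom_one_in_zero C"
    and kunneth: "fequiv C (tensor C1 C2)" and C1: "is_cx C1"
  shows "dim B = dim B1 * dim B2"
    and "4 * int (even_bars B) = 4 * int (even_bars B1) + 4 * int (even_bars B2)
           + (int (dim B1) - 1) * (int (dim B2) - 1)"
    and "4 * int (odd_bars B) = 4 * int (odd_bars B1) + 4 * int (odd_bars B2)
           + (int (dim B1) - 1) * (int (dim B2) - 1)"
proof -
  note inv1 = bar_rep_invariants[OF rep1 hom(1)] and inv2 = bar_rep_invariants[OF rep2 hom(2)]
    and inv = bar_rep_invariants[OF rep hom(3)]
  note sums = sum_gr_bar_rep_tensor[OF rep1 rep2 rep kunneth C1]
  have dim: "int (dim B) = int (dim B1) * int (dim B2)"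
    using sums[of "\<lambda>_. 1 :: int"] by simp
  then show "dim B = dim B1 * dim B2"
    by (simp flip: of_nat_mult)
  have "(\<Sum>i<dim B. alt_deriv (gr B i)) =
      (\<Sum>a<dim B1. alt_deriv (gr B1 a)) * (\<Sum>b<dim B2. alt (gr B2 b)) +
      (\<Sum>a<dim B1. alt (gr B1 a)) * (\<Sum>b<dim B2. alt_deriv (gr B2 b))"
    unfolding sums alt_deriv_add by (simp add: sum.distrib sum_product)
  then have "int (even_bars B) - int (odd_bars B) =
      int (even_bars B1) - int (odd_bars B1) + (int (even_bars B2) - int (odd_bars B2))"
    by (simp add: inv1 inv2 inv)
  with dim inv1(1) inv2(1) inv(1)
  show "4 * int (even_bars B) = 4 * int (even_bars B1) + 4 * int (even_bars B2)
          + (int (dim B1) - 1) * (int (dim B2) - 1)"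
    and "4 * int (odd_bars B) = 4 * int (odd_bars B1) + 4 * int (odd_bars B2)
          + (int (dim B1) - 1) * (int (dim B2) - 1)"
    by algebra+
qed

theorem mainTheorem5:
  fixes CFK :: "'k \<Rightarrow> cx" and csum :: "'k \<Rightarrow> 'k \<Rightarrow> 'k"
  assumes cfk: "\<And>K. is_cx (CFK K) \<and> hom_one_in_zero (CFK K)"
    and kunneth: "\<And>K1 K2. fequiv (CFK (csum K1 K2)) (tensor (CFK K1) (CFK K2))"
  shows "\<forall>K1 K2 B1 B2 B. bar_rep B1 (CFK K1) \<and> bar_rep B2 (CFK K2)
            \<and> bar_rep B (CFK (csum K1 K2)) \<longrightarrow>
           dim B = dim B1 * dim B2
         \<and> 4 * int (even_bars B) = 4 * int (even_bars B1) + 4 * int (even_bars B2)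
              + (int (dim B1) - 1) * (int (dim B2) - 1)
         \<and> 4 * int (odd_bars B) = 4 * int (odd_bars B1) + 4 * int (odd_bars B2)
              + (int (dim B1) - 1) * (int (dim B2) - 1)"
  using cfk kunneth by (blast intro: bar_rep_tensor_counts)

end
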